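(* Let $\theta>0$ and let $(Z_{ij}: i,j\in\mathbb{Z})$ be a real stationary Gaussian process with mean $\theta$ and covariance kernel $R(i,j)=\mathrm{Cov}(Z_{00},Z_{ij})$ satisfying $\sum_{i,j\in\mathbb{Z}}|R(i,j)|<\infty$ and $\sum_{i,j\in\mathbb{Z}}R(i,j)\neq0$. Let $X_{ij}=Z_{ij}-\theta$, let $W_N$ be the $N\times N$ matrix with entries $W_N(i,j)=X_{ij}+X_{ji}$, $1\le i,j\le N$, and let $\mathbf{1}_N$ be the column vector of length $N$ with all entries $1$. Then, as $N\to\infty$, $$N^{-2}\,\mathbf{1}_N' W_N^2\mathbf{1}_N \xrightarrow{P} 2\alpha\theta,\qquad\text{where }\alpha=\frac{1}{2\theta}\sum_{i=-\infty}^{\infty}\big(R(i,0)+R(0,i)\big).$$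
   Context: Stationarity means the law of the process is invariant under shifts of the index set $\mathbb{Z}^2$, so $\mathrm{Cov}(Z_{ij},Z_{kl})=R(k-i,l-j)$. $\xrightarrow{P}$ denotes convergence in probability. *)

theory Defs
  imports "HOL-Probability.Probability"
begin

definition gaussian_rv :: "'a measure \<Rightarrow> ('a \<Rightarrow> real) \<Rightarrow> bool" where
  "gaussian_rv M X \<longleftrightarrow>
     (\<exists>\<mu> \<sigma>. \<sigma> > 0 \<and> distributed M lborel X (normal_density \<mu> \<sigma>))
     \<or> (X \<in> borel_measurable M \<and> (\<exists>c. AE \<omega> in M. X \<omega> = c))"

definition gaussian_process :: "'a measure \<Rightarrow> ('i \<Rightarrow> 'a \<Rightarrow> real) \<Rightarrow> bool" where
  "gaussian_process M Z \<longleftrightarrow>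
     (\<forall>i. Z i \<in> borel_measurable M) \<and>
     (\<forall>S c. finite S \<longrightarrow> gaussian_rv M (\<lambda>\<omega>. \<Sum>s\<in>S. c s * Z s \<omega>))"

definition stationary2 :: "'a measure \<Rightarrow> (int \<times> int \<Rightarrow> 'a \<Rightarrow> real) \<Rightarrow> bool" where
  "stationary2 M Z \<longleftrightarrow>
     (\<forall>a b. distr M (PiM UNIV (\<lambda>_. borel)) (\<lambda>\<omega> p. Z (fst p + a, snd p + b) \<omega>)
          = distr M (PiM UNIV (\<lambda>_. borel)) (\<lambda>\<omega> p. Z p \<omega>))"

definition conv_in_prob :: "'a measure \<Rightarrow> (nat \<Rightarrow> 'a \<Rightarrow> real) \<Rightarrow> real \<Rightarrow> bool" where
  "conv_in_prob M Y c \<longleftrightarrow>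
     (\<forall>\<epsilon>>0. (\<lambda>n. measure M {\<omega> \<in> space M. \<bar>Y n \<omega> - c\<bar> > \<epsilon>}) \<longlonglongrightarrow> 0)"

end

theory Submission
  imports Defs
begin

(* Write X = Z - theta, let S_k be the k-th row sum of the symmetric matrix W_N and
  Q_N = Sum_k S_k^2, which is 1' W_N^2 1.  By stationarity, Cov(S_k, S_l) is an explicit sum of
  values of R.  On the diagonal this gives E Q_N = N D_N + O(N), where
  D_N = Sum_{i,j <= N} f(j - i) with f(m) = R(m,0) + R(0,m); D_N / N is the Cesaro mean of the
  symmetric partial sums of f, so E Q_N / N^2 tends to Sum_m f(m) = 2 alpha theta.
  The S_k are jointly Gaussian, so Isserlis' formula E[a^2 b^2] = E a^2 E b^2 + 2 (E ab)^2 gives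
  Var Q_N = 2 Sum_{k,l} Cov(S_k, S_l)^2, which absolute summability of R bounds by O(N^3).
  Hence Var(Q_N / N^2) = O(1/N), and Chebyshev's inequality gives convergence in probability. *)

lemma cesaro_mean_tendsto:
  fixes a :: "nat \<Rightarrow> real"
  assumes "a \<longlonglongrightarrow> L"
  shows "(\<lambda>N. (\<Sum>n\<in>{1..N}. a n) / real N) \<longlonglongrightarrow> L"
proof (rule LIMSEQ_I)
  fix \<epsilon> :: real assume "\<epsilon> > 0"
  then obtain K where K: "\<And>n. n \<ge> K \<Longrightarrow> \<bar>a n - L\<bar> < \<epsilon> / 2"
    using assms unfolding LIMSEQ_def dist_real_def by (metis half_gt_zero)
  define B where "B = (\<Sum>n\<in>{1..K}. \<bar>a n - L\<bar>)"
  obtain N0 :: nat where N0: "real N0 > 2 * B / \<epsilon>"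
    using reals_Archimedean2 by blast
  have "\<bar>(\<Sum>n\<in>{1..N}. a n) / real N - L\<bar> < \<epsilon>" if N: "N \<ge> max (Suc N0) K" for N
  proof -
    have pos: "real N > 0" using N by simp
    have "\<bar>\<Sum>n\<in>{1..N}. a n - L\<bar> \<le> (\<Sum>n\<in>{1..N}. \<bar>a n - L\<bar>)"
      by (rule sum_abs)
    also have "\<dots> = B + (\<Sum>n\<in>{K<..N}. \<bar>a n - L\<bar>)"
      unfolding B_def using N by (subst sum.union_disjoint[symmetric]) (auto intro!: sum.cong)
    also have "\<dots> \<le> B + (\<Sum>n\<in>{K<..N}. \<epsilon> / 2)"
      using K by (intro add_left_mono sum_mono) (simp add: less_imp_le)
    also have "\<dots> \<le> B + real N * (\<epsilon> / 2)"
      using \<open>\<epsilon> > 0\<close> by simp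
    also have "\<dots> < real N * \<epsilon>"
    proof -
      have "2 * B < \<epsilon> * real N0"
        using N0 \<open>\<epsilon> > 0\<close> by (simp add: field_simps)
      also have "\<dots> \<le> \<epsilon> * real N"
        using N \<open>\<epsilon> > 0\<close> by simp
      finally show ?thesis by (simp add: field_simps)
    qed
    finally have "\<bar>(\<Sum>n\<in>{1..N}. a n) - real N * L\<bar> < real N * \<epsilon>"
      by (simp add: sum_subtractf)
    then show ?thesis
      using pos by (simp add: field_simps abs_divide)
  qed
  then show "\<exists>N0. \<forall>N\<ge>N0. norm ((\<Sum>n\<in>{1..N}. a n) / real N - L) < \<epsilon>"
    by (metis max.bounded_iff real_norm_def)
qed

lemma has_sum_imp_symmetric_partial_sums:
  fixes f :: "int \<Rightarrow> 'a::{comm_monoid_add, topological_space}"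
  assumes "(f has_sum F) UNIV"
  shows "(\<lambda>n. sum f {-int n<..<int n}) \<longlonglongrightarrow> F"
proof -
  have "filterlim (\<lambda>n. {-int n<..<int n}) (finite_subsets_at_top UNIV) sequentially"
    unfolding filterlim_finite_subsets_at_top
  proof (intro allI impI)
    fix X :: "int set" assume "finite X \<and> X \<subseteq> UNIV"
    then obtain b where "abs ` X \<subseteq> {..b}"
      using finite_int_iff_bounded_le by blast
    then show "eventually (\<lambda>n. finite {-int n<..<int n} \<and> X \<subseteq> {-int n<..<int n} \<and>
        {-int n<..<int n} \<subseteq> UNIV) sequentially"
      by (intro eventually_mono[OF eventually_gt_at_top[of "nat b"]]) force
  qed
  with assms show ?thesis
    unfolding has_sum_def by (rule filterlim_compose)
qed

lemma sum_square_diff_Suc: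
  fixes f :: "int \<Rightarrow> 'a::comm_monoid_add"
  shows "(\<Sum>i\<in>{1..Suc N}. \<Sum>j\<in>{1..Suc N}. f (int j - int i)) =
    (\<Sum>i\<in>{1..N}. \<Sum>j\<in>{1..N}. f (int j - int i)) + sum f {-int (Suc N)<..<int (Suc N)}"
proof -
  have lower: "(\<Sum>j\<in>{1..Suc N}. f (int j - int (Suc N))) = sum f {-int N..0}"
    by (rule sum.reindex_bij_witness[of _ "\<lambda>m. nat (m + int N + 1)" "\<lambda>j. int j - int (Suc N)"]) auto
  have upper: "(\<Sum>i\<in>{1..N}. f (int (Suc N) - int i)) = sum f {0<..int N}"
    by (rule sum.reindex_bij_witness[of _ "\<lambda>m. nat (int N + 1 - m)" "\<lambda>i. int (Suc N) - int i"]) auto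
  have split: "{-int (Suc N)<..<int (Suc N)} = {-int N..0} \<union> {0<..int N}"
    by auto
  have "(\<Sum>i\<in>{1..Suc N}. \<Sum>j\<in>{1..Suc N}. f (int j - int i)) =
    (\<Sum>i\<in>{1..N}. \<Sum>j\<in>{1..N}. f (int j - int i)) +
    ((\<Sum>j\<in>{1..Suc N}. f (int j - int (Suc N))) + (\<Sum>i\<in>{1..N}. f (int (Suc N) - int i)))"
    by (simp add: sum.distrib ac_simps del: of_nat_Suc)
  then show ?thesis
    unfolding lower upper split by (subst sum.union_disjoint) auto
qed

lemma sum_square_diff_eq_sum_symmetric_partial_sums:
  fixes f :: "int \<Rightarrow> 'a::comm_monoid_add"
  shows "(\<Sum>i\<in>{1..N}. \<Sum>j\<in>{1..N}. f (int j - int i)) = (\<Sum>n\<in>{1..N}. sum f {-int n<..<int n})"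
proof (induction N)
  case (Suc N)
  then show ?case
    by (simp only: sum_square_diff_Suc) simp
qed simp

lemma has_sum_imp_cesaro_diff_sums:
  fixes f :: "int \<Rightarrow> real"
  assumes "(f has_sum F) UNIV"
  shows "(\<lambda>N. (\<Sum>i\<in>{1..N}. \<Sum>j\<in>{1..N}. f (int j - int i)) / real N) \<longlonglongrightarrow> F"
  unfolding sum_square_diff_eq_sum_symmetric_partial_sums
  by (rule cesaro_mean_tendsto[OF has_sum_imp_symmetric_partial_sums[OF assms]])

lemma sum_abs_comp_le_infsum_abs:
  fixes f :: "'b \<Rightarrow> real"
  assumes "(\<lambda>y. \<bar>f y\<bar>) summable_on UNIV" "finite A" "inj_on g A"
  shows "(\<Sum>x\<in>A. \<bar>f (g x)\<bar>) \<le> (\<Sum>\<^sub>\<infinity>y. \<bar>f y\<bar>)"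
proof -
  have "(\<Sum>x\<in>A. \<bar>f (g x)\<bar>) = (\<Sum>y\<in>g ` A. \<bar>f y\<bar>)"
    by (simp add: sum.reindex[OF assms(3)])
  also have "\<dots> \<le> (\<Sum>\<^sub>\<infinity>y. \<bar>f y\<bar>)"
    using assms(1,2) by (intro finite_sum_le_infsum) auto
  finally show ?thesis .
qed

(* Cov(S_k, S_l) for the row sums S_k of W_N, expanded by stationarity. *)
definition rowsum_cov :: "(int \<Rightarrow> int \<Rightarrow> real) \<Rightarrow> nat \<Rightarrow> nat \<Rightarrow> nat \<Rightarrow> real" where
  "rowsum_cov R N k l = (\<Sum>i\<in>{1..N}. \<Sum>j\<in>{1..N}.
     R (int j - int i) (int l - int k) + R (int l - int i) (int j - int k) +
     R (int j - int k) (int l - int i) + R (int l - int k) (int j - int i))"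

lemma abs_rowsum_cov_le_sum_abs:
  "\<bar>rowsum_cov R N k l\<bar> \<le> (\<Sum>i\<in>{1..N}. \<Sum>j\<in>{1..N}.
     \<bar>R (int j - int i) (int l - int k)\<bar> + \<bar>R (int l - int i) (int j - int k)\<bar> +
     \<bar>R (int j - int k) (int l - int i)\<bar> + \<bar>R (int l - int k) (int j - int i)\<bar>)"
  unfolding rowsum_cov_def
  by (rule order_trans[OF sum_abs], rule sum_mono, rule order_trans[OF sum_abs], rule sum_mono) linarith

context
  fixes R :: "int \<Rightarrow> int \<Rightarrow> real"
  assumes abs_summable: "(\<lambda>(i, j). \<bar>R i j\<bar>) summable_on UNIV"
begin

abbreviation "total_abs \<equiv> \<Sum>\<^sub>\<infinity>(i, j)\<in>UNIV. \<bar>R i j\<bar>"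

lemma sum_abs_kernel_le:
  assumes "finite A" "inj_on (\<lambda>x. (u x, v x)) A"
  shows "(\<Sum>x\<in>A. \<bar>R (u x) (v x)\<bar>) \<le> total_abs"
  using sum_abs_comp_le_infsum_abs[of "case_prod R", OF _ assms] abs_summable
  by (simp add: case_prod_beta' split_def)

lemma double_sum_abs_kernel_le:
  assumes "finite A" "finite B" "inj_on (\<lambda>(x, y). (u x y, v x y)) (A \<times> B)"
  shows "(\<Sum>x\<in>A. \<Sum>y\<in>B. \<bar>R (u x y) (v x y)\<bar>) \<le> total_abs"
  using sum_abs_kernel_le[of "A \<times> B" "\<lambda>(x, y). u x y" "\<lambda>(x, y). v x y"] assms
  by (simp add: sum.cartesian_product split_def)

lemma total_abs_nonneg: "total_abs \<ge> 0"
  by (intro infsum_nonneg) auto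

lemma abs_rowsum_cov_le: "\<bar>rowsum_cov R N k l\<bar> \<le> 4 * real N * total_abs"
proof -
  have "\<bar>rowsum_cov R N k l\<bar> \<le> (\<Sum>i\<in>{1..N}.
      (\<Sum>j\<in>{1..N}. \<bar>R (int j - int i) (int l - int k)\<bar>) +
      (\<Sum>j\<in>{1..N}. \<bar>R (int l - int i) (int j - int k)\<bar>) +
      (\<Sum>j\<in>{1..N}. \<bar>R (int j - int k) (int l - int i)\<bar>) +
      (\<Sum>j\<in>{1..N}. \<bar>R (int l - int k) (int j - int i)\<bar>))"
    using abs_rowsum_cov_le_sum_abs by (simp add: sum.distrib)
  also have "\<dots> \<le> (\<Sum>i\<in>{1..N}. total_abs + total_abs + total_abs + total_abs)"
    by (intro sum_mono add_mono sum_abs_kernel_le) (auto simp: inj_on_def)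
  finally show ?thesis
    by simp
qed

lemma sum_abs_rowsum_cov_le:
  "(\<Sum>k\<in>{1..N}. \<Sum>l\<in>{1..N}. \<bar>rowsum_cov R N k l\<bar>) \<le> 4 * (real N)^2 * total_abs"
proof -
  have "(\<Sum>k\<in>{1..N}. \<Sum>l\<in>{1..N}. \<bar>rowsum_cov R N k l\<bar>) \<le> (\<Sum>k\<in>{1..N}. \<Sum>l\<in>{1..N}. \<Sum>i\<in>{1..N}. \<Sum>j\<in>{1..N}.
     \<bar>R (int j - int i) (int l - int k)\<bar> + \<bar>R (int l - int i) (int j - int k)\<bar> +
     \<bar>R (int j - int k) (int l - int i)\<bar> + \<bar>R (int l - int k) (int j - int i)\<bar>)"
    by (intro sum_mono abs_rowsum_cov_le_sum_abs)
  also have "\<dots> = (\<Sum>k\<in>{1..N}. \<Sum>i\<in>{1..N}.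
      (\<Sum>l\<in>{1..N}. \<Sum>j\<in>{1..N}. \<bar>R (int j - int i) (int l - int k)\<bar>) +
      (\<Sum>l\<in>{1..N}. \<Sum>j\<in>{1..N}. \<bar>R (int l - int i) (int j - int k)\<bar>) +
      (\<Sum>l\<in>{1..N}. \<Sum>j\<in>{1..N}. \<bar>R (int j - int k) (int l - int i)\<bar>) +
      (\<Sum>l\<in>{1..N}. \<Sum>j\<in>{1..N}. \<bar>R (int l - int k) (int j - int i)\<bar>))"
    by (rule sum.cong[OF refl], subst sum.swap) (simp add: sum.distrib)
  also have "\<dots> \<le> (\<Sum>k\<in>{1..N}. \<Sum>i\<in>{1..N}. total_abs + total_abs + total_abs + total_abs)"
    by (intro sum_mono add_mono double_sum_abs_kernel_le) (auto simp: inj_on_def)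
  finally show ?thesis
    by (simp add: power2_eq_square)
qed

lemma sum_rowsum_cov_sq_le:
  "(\<Sum>k\<in>{1..N}. \<Sum>l\<in>{1..N}. (rowsum_cov R N k l)^2) \<le> 16 * (real N)^3 * total_abs^2"
proof -
  have "(\<Sum>k\<in>{1..N}. \<Sum>l\<in>{1..N}. (rowsum_cov R N k l)^2)
      \<le> (\<Sum>k\<in>{1..N}. \<Sum>l\<in>{1..N}. (4 * real N * total_abs) * \<bar>rowsum_cov R N k l\<bar>)"
  proof (intro sum_mono)
    fix k l
    have "(rowsum_cov R N k l)^2 = \<bar>rowsum_cov R N k l\<bar> * \<bar>rowsum_cov R N k l\<bar>"
      by (simp add: power2_eq_square)
    also have "\<dots> \<le> (4 * real N * total_abs) * \<bar>rowsum_cov R N k l\<bar>"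
      by (intro mult_right_mono abs_rowsum_cov_le) simp
    finally show "(rowsum_cov R N k l)^2 \<le> (4 * real N * total_abs) * \<bar>rowsum_cov R N k l\<bar>" .
  qed
  also have "\<dots> \<le> (4 * real N * total_abs) * (4 * (real N)^2 * total_abs)"
    unfolding sum_distrib_left[symmetric]
    by (intro mult_left_mono sum_abs_rowsum_cov_le) (simp add: total_abs_nonneg)
  finally show ?thesis
    by (simp add: power2_eq_square power3_eq_cube mult_ac)
qed

lemma rowsum_cov_trace_approx:
  "\<bar>(\<Sum>k\<in>{1..N}. rowsum_cov R N k k) -
     real N * (\<Sum>i\<in>{1..N}. \<Sum>j\<in>{1..N}. R (int j - int i) 0 + R 0 (int j - int i))\<bar>
   \<le> 2 * real N * total_abs"
proof -
  define cross where "cross k = (\<Sum>i\<in>{1..N}. \<Sum>j\<in>{1..N}.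
    R (int k - int i) (int j - int k) + R (int j - int k) (int k - int i))" for k
  have diag: "rowsum_cov R N k k =
      (\<Sum>i\<in>{1..N}. \<Sum>j\<in>{1..N}. R (int j - int i) 0 + R 0 (int j - int i)) + cross k" for k
    unfolding rowsum_cov_def cross_def by (simp add: sum.distrib[symmetric] add_ac)
  have "\<bar>cross k\<bar> \<le> (\<Sum>i\<in>{1..N}. \<Sum>j\<in>{1..N}. \<bar>R (int k - int i) (int j - int k)\<bar>) +
      (\<Sum>i\<in>{1..N}. \<Sum>j\<in>{1..N}. \<bar>R (int j - int k) (int k - int i)\<bar>)" for k
    unfolding cross_def sum.distrib[symmetric]
    by (rule order_trans[OF sum_abs], rule sum_mono, rule order_trans[OF sum_abs], rule sum_mono) simp
  also have "\<dots> k \<le> total_abs + total_abs" for k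
    by (intro add_mono double_sum_abs_kernel_le) (auto simp: inj_on_def)
  finally have "\<bar>\<Sum>k\<in>{1..N}. cross k\<bar> \<le> (\<Sum>k\<in>{1..N}. 2 * total_abs)"
    by (intro order_trans[OF sum_abs] sum_mono) simp
  then show ?thesis
    by (simp add: diag sum.distrib)
qed

lemma kernel_summable_on_line:
  assumes "inj (\<lambda>m. (u m, v m))"
  shows "(\<lambda>m. R (u m) (v m)) summable_on UNIV"
proof -
  have "(\<lambda>(i, j). R i j) summable_on UNIV"
    by (rule abs_summable_summable) (use abs_summable in \<open>simp add: case_prod_unfold\<close>)
  then have "(\<lambda>(i, j). R i j) summable_on range (\<lambda>m. (u m, v m))"
    by (rule summable_on_subset_banach) simp
  then show ?thesis
    by (subst (asm) summable_on_reindex[OF assms]) (simp add: o_def)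
qed

lemma rowsum_cov_trace_tendsto:
  "(\<lambda>N. (\<Sum>k\<in>{1..N}. rowsum_cov R N k k) / (real N)^2) \<longlonglongrightarrow> (\<Sum>\<^sub>\<infinity>m. R m 0 + R 0 m)"
proof -
  define D where "D N = (\<Sum>i\<in>{1..N}. \<Sum>j\<in>{1..N}. R (int j - int i) 0 + R 0 (int j - int i))" for N
  have "(\<lambda>m. R m 0 + R 0 m) summable_on UNIV"
    by (intro summable_on_add kernel_summable_on_line) (auto simp: inj_def)
  then have "(\<lambda>N. D N / real N) \<longlonglongrightarrow> (\<Sum>\<^sub>\<infinity>m. R m 0 + R 0 m)"
    unfolding D_def by (intro has_sum_imp_cesaro_diff_sums has_sum_infsum)
  moreover have "(\<lambda>N. (\<Sum>k\<in>{1..N}. rowsum_cov R N k k) / (real N)^2 - D N / real N) \<longlonglongrightarrow> 0"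
  proof (rule Lim_null_comparison[OF _ lim_const_over_n])
    show "\<forall>\<^sub>F N in sequentially. norm ((\<Sum>k\<in>{1..N}. rowsum_cov R N k k) / (real N)^2 - D N / real N)
        \<le> 2 * total_abs / real N"
    proof (intro eventually_sequentiallyI)
      fix N :: nat assume "N \<ge> 1"
      then have "(\<Sum>k\<in>{1..N}. rowsum_cov R N k k) / (real N)^2 - D N / real N
          = ((\<Sum>k\<in>{1..N}. rowsum_cov R N k k) - real N * D N) / (real N)^2"
        by (simp add: field_simps power2_eq_square)
      also have "\<bar>\<dots>\<bar> = \<bar>(\<Sum>k\<in>{1..N}. rowsum_cov R N k k) - real N * D N\<bar> / (real N)^2"
        by (simp add: abs_divide)
      also have "\<dots> \<le> (2 * real N * total_abs) / (real N)^2"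
        unfolding D_def by (intro divide_right_mono rowsum_cov_trace_approx) simp
      finally show "norm ((\<Sum>k\<in>{1..N}. rowsum_cov R N k k) / (real N)^2 - D N / real N)
          \<le> 2 * total_abs / real N"
        using \<open>N \<ge> 1\<close> by (simp add: power2_eq_square)
    qed
  qed
  ultimately show ?thesis
    by (rule Lim_transform)
qed

lemma rowsum_cov_sq_sum_tendsto:
  "(\<lambda>N. (\<Sum>k\<in>{1..N}. \<Sum>l\<in>{1..N}. (rowsum_cov R N k l)^2) / (real N)^4) \<longlonglongrightarrow> 0"
proof (rule Lim_null_comparison[OF _ lim_const_over_n])
  show "\<forall>\<^sub>F N in sequentially. norm ((\<Sum>k\<in>{1..N}. \<Sum>l\<in>{1..N}. (rowsum_cov R N k l)^2) / (real N)^4)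
      \<le> 16 * total_abs^2 / real N"
  proof (intro eventually_sequentiallyI)
    fix N :: nat assume "N \<ge> 1"
    have "norm ((\<Sum>k\<in>{1..N}. \<Sum>l\<in>{1..N}. (rowsum_cov R N k l)^2) / (real N)^4)
        = (\<Sum>k\<in>{1..N}. \<Sum>l\<in>{1..N}. (rowsum_cov R N k l)^2) / (real N)^4"
      by (simp add: sum_nonneg)
    also have "\<dots> \<le> 16 * (real N)^3 * total_abs^2 / (real N)^4"
      by (intro divide_right_mono sum_rowsum_cov_sq_le) simp
    also have "\<dots> = 16 * total_abs^2 / real N"
      using \<open>N \<ge> 1\<close> by (simp add: divide_simps eval_nat_numeral)
    finally show "norm ((\<Sum>k\<in>{1..N}. \<Sum>l\<in>{1..N}. (rowsum_cov R N k l)^2) / (real N)^4)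
        \<le> 16 * total_abs^2 / real N" .
  qed
qed

end

lemma sum_triple_product_symmetric:
  fixes W :: "'b \<Rightarrow> 'b \<Rightarrow> 'c::comm_semiring_1"
  assumes "\<And>i k. W i k = W k i"
  shows "(\<Sum>i\<in>A. \<Sum>j\<in>A. \<Sum>k\<in>A. W i k * W k j) = (\<Sum>k\<in>A. (\<Sum>i\<in>A. W i k)^2)"
proof -
  have "(\<Sum>i\<in>A. \<Sum>j\<in>A. \<Sum>k\<in>A. W i k * W k j) = (\<Sum>i\<in>A. \<Sum>k\<in>A. \<Sum>j\<in>A. W i k * W j k)"
    by (intro sum.cong refl sum.swap[THEN trans]) (simp add: assms)
  also have "\<dots> = (\<Sum>k\<in>A. \<Sum>i\<in>A. \<Sum>j\<in>A. W i k * W j k)"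
    by (rule sum.swap)
  finally show ?thesis
    by (simp add: power2_eq_square sum_product)
qed

lemma (in prob_space) normal_centered_moments:
  assumes "\<sigma> > 0" and Y: "distributed M lborel Y (normal_density \<mu> \<sigma>)"
  shows "expectation Y = \<mu>"
    and "integrable M (\<lambda>\<omega>. (Y \<omega> - \<mu>)^k)"
    and "expectation (\<lambda>\<omega>. (Y \<omega> - \<mu>)^4) = 3 * (expectation (\<lambda>\<omega>. (Y \<omega> - \<mu>)^2))^2"
proof -
  show "expectation Y = \<mu>"
    by (rule normal_distributed_expectation[OF assms])
  show "integrable M (\<lambda>\<omega>. (Y \<omega> - \<mu>)^k)"
    using distributed_integrable[OF Y, of "\<lambda>x. (x - \<mu>)^k"] integrable_normal_moment[OF \<open>\<sigma> > 0\<close>] by simp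
  have even: "expectation (\<lambda>\<omega>. (Y \<omega> - \<mu>)^(2 * k)) = fact (2 * k) / ((2 / \<sigma>\<^sup>2)^k * fact k)" for k
    using distributed_integral[OF Y, of "\<lambda>x. (x - \<mu>)^(2 * k)"] integral_normal_moment_even[OF \<open>\<sigma> > 0\<close>]
    by simp
  show "expectation (\<lambda>\<omega>. (Y \<omega> - \<mu>)^4) = 3 * (expectation (\<lambda>\<omega>. (Y \<omega> - \<mu>)^2))^2"
    using even[of 1] even[of 2] \<open>\<sigma> > 0\<close>
    by (simp add: fact_numeral field_simps power2_eq_square eval_nat_numeral)
qed

lemma (in prob_space) degenerate_centered_moments:
  fixes Y :: "'a \<Rightarrow> real"
  assumes [measurable]: "Y \<in> borel_measurable M" and Y: "AE \<omega> in M. Y \<omega> = c"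
  shows "expectation Y = c"
    and "integrable M (\<lambda>\<omega>. (Y \<omega> - c)^k)"
    and "expectation (\<lambda>\<omega>. (Y \<omega> - c)^4) = 3 * (expectation (\<lambda>\<omega>. (Y \<omega> - c)^2))^2"
proof -
  have "expectation Y = expectation (\<lambda>_. c)"
    by (rule integral_cong_AE) (use Y in auto)
  then show "expectation Y = c"
    by (simp add: prob_space)
  have moment: "integrable M (\<lambda>\<omega>. (Y \<omega> - c)^k) \<and> expectation (\<lambda>\<omega>. (Y \<omega> - c)^k) = 0^k" for k
  proof -
    have ae: "AE \<omega> in M. (Y \<omega> - c)^k = 0^k"
      using Y by eventually_elim simp
    show ?thesis
      using integrable_cong_AE[OF _ _ ae] integral_cong_AE[OF _ _ ae] by (simp add: prob_space)
  qed
  then show "integrable M (\<lambda>\<omega>. (Y \<omega> - c)^k)"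
    by blast
  show "expectation (\<lambda>\<omega>. (Y \<omega> - c)^4) = 3 * (expectation (\<lambda>\<omega>. (Y \<omega> - c)^2))^2"
    using moment[of 2] moment[of 4] by simp
qed

lemma (in prob_space) gaussian_rv_centered_moments:
  assumes "gaussian_rv M Y"
  shows "integrable M (\<lambda>\<omega>. (Y \<omega> - expectation Y)^k)"
    and "expectation (\<lambda>\<omega>. (Y \<omega> - expectation Y)^4) = 3 * (expectation (\<lambda>\<omega>. (Y \<omega> - expectation Y)^2))^2"
  using assms normal_centered_moments degenerate_centered_moments unfolding gaussian_rv_def by metis+

lemma (in prob_space) gaussian_rv_integrable:
  assumes "gaussian_rv M Y"
  shows "integrable M Y"
proof -
  have "integrable M (\<lambda>\<omega>. (Y \<omega> - expectation Y) + expectation Y)"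
    using gaussian_rv_centered_moments(1)[OF assms, of 1]
    by (intro Bochner_Integration.integrable_add) auto
  then show ?thesis
    by (simp only: diff_add_cancel)
qed

lemma (in prob_space) variance_scale:
  fixes Y :: "'a \<Rightarrow> real"
  shows "variance (\<lambda>\<omega>. c * Y \<omega>) = c^2 * variance Y"
proof -
  have "(c * Y \<omega> - expectation (\<lambda>\<omega>. c * Y \<omega>))^2 = c^2 * (Y \<omega> - expectation Y)^2" for \<omega>
    by (simp add: power_mult_distrib right_diff_distrib[symmetric])
  then show ?thesis
    by simp
qed

lemma (in prob_space) conv_in_prob_if_expectation_variance_tendsto:
  assumes [measurable]: "\<And>n. Y n \<in> borel_measurable M"
    and square_integrable: "\<And>n. integrable M (\<lambda>\<omega>. (Y n \<omega>)^2)"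
    and expectation: "(\<lambda>n. expectation (Y n)) \<longlonglongrightarrow> c"
    and variance: "(\<lambda>n. variance (Y n)) \<longlonglongrightarrow> 0"
  shows "conv_in_prob M Y c"
  unfolding conv_in_prob_def
proof (intro allI impI)
  fix \<epsilon> :: real assume "\<epsilon> > 0"
  have "eventually (\<lambda>n. \<bar>expectation (Y n) - c\<bar> < \<epsilon> / 2) sequentially"
    using tendstoD[OF expectation, of "\<epsilon> / 2"] \<open>\<epsilon> > 0\<close> by (simp add: dist_real_def)
  then have bound: "eventually (\<lambda>n.
      prob {\<omega> \<in> space M. \<bar>Y n \<omega> - c\<bar> > \<epsilon>} \<le> variance (Y n) / (\<epsilon> / 2)^2) sequentially"
  proof eventually_elim
    case (elim n)
    have "{\<omega> \<in> space M. \<bar>Y n \<omega> - c\<bar> > \<epsilon>} \<subseteq> {\<omega> \<in> space M. \<bar>Y n \<omega> - expectation (Y n)\<bar> \<ge> \<epsilon> / 2}"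
    proof (intro subsetI, elim CollectE conjE, intro CollectI conjI)
      fix \<omega> assume "\<omega> \<in> space M" "\<epsilon> < \<bar>Y n \<omega> - c\<bar>"
      have "\<bar>Y n \<omega> - c\<bar> \<le> \<bar>Y n \<omega> - expectation (Y n)\<bar> + \<bar>expectation (Y n) - c\<bar>"
        using abs_triangle_ineq[of "Y n \<omega> - expectation (Y n)" "expectation (Y n) - c"] by simp
      with elim \<open>\<epsilon> < \<bar>Y n \<omega> - c\<bar>\<close> show "\<epsilon> / 2 \<le> \<bar>Y n \<omega> - expectation (Y n)\<bar>"
        by linarith
    qed
    then have "prob {\<omega> \<in> space M. \<bar>Y n \<omega> - c\<bar> > \<epsilon>}
        \<le> prob {\<omega> \<in> space M. \<bar>Y n \<omega> - expectation (Y n)\<bar> \<ge> \<epsilon> / 2}"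
      by (intro finite_measure_mono) auto
    also have "\<dots> \<le> variance (Y n) / (\<epsilon> / 2)^2"
      using \<open>\<epsilon> > 0\<close> by (intro Chebyshev_inequality square_integrable) auto
    finally show ?case .
  qed
  have nonneg: "eventually (\<lambda>n. 0 \<le> prob {\<omega> \<in> space M. \<bar>Y n \<omega> - c\<bar> > \<epsilon>}) sequentially"
    by simp
  have "(\<lambda>n. variance (Y n) / (\<epsilon> / 2)^2) \<longlonglongrightarrow> 0"
    using tendsto_divide[OF variance tendsto_const[of "(\<epsilon> / 2)^2"]] \<open>\<epsilon> > 0\<close> by simp
  then show "(\<lambda>n. prob {\<omega> \<in> space M. \<bar>Y n \<omega> - c\<bar> > \<epsilon>}) \<longlonglongrightarrow> 0"
    by (rule tendsto_sandwich[OF nonneg bound tendsto_const])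
qed

locale stationary_gaussian_field = prob_space M for M :: "'a measure" +
  fixes Z :: "int \<times> int \<Rightarrow> 'a \<Rightarrow> real" and \<theta> :: real and R :: "int \<Rightarrow> int \<Rightarrow> real"
  assumes gaussian: "gaussian_process M Z"
    and stationary: "stationary2 M Z"
    and mean: "\<And>i j. expectation (Z (i, j)) = \<theta>"
    and covariance: "\<And>i j. R i j = expectation (\<lambda>\<omega>. (Z (0, 0) \<omega> - \<theta>) * (Z (i, j) \<omega> - \<theta>))"
begin

definition X :: "int \<times> int \<Rightarrow> 'a \<Rightarrow> real" where
  "X p \<omega> = Z p \<omega> - \<theta>"

lemma Z_measurable [measurable]: "Z p \<in> borel_measurable M"
  using gaussian unfolding gaussian_process_def by blast

lemma gaussian_rv_combination: "finite S \<Longrightarrow> gaussian_rv M (\<lambda>\<omega>. \<Sum>s\<in>S. c s * Z s \<omega>)"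
  using gaussian unfolding gaussian_process_def by blast

lemma integrable_Z: "integrable M (Z p)"
  using gaussian_rv_integrable[OF gaussian_rv_combination[of "{p}" "\<lambda>_. 1"]] by simp

lemma expectation_Z: "expectation (Z p) = \<theta>"
  using mean[of "fst p" "snd p"] by simp

definition lincomb :: "('a \<Rightarrow> real) \<Rightarrow> bool" where
  "lincomb Y \<longleftrightarrow> (\<exists>S c. finite S \<and> Y = (\<lambda>\<omega>. \<Sum>s\<in>S. c s * X s \<omega>))"

lemma lincomb_centered_gaussian:
  assumes "lincomb Y"
  obtains G where "gaussian_rv M G" and "Y = (\<lambda>\<omega>. G \<omega> - expectation G)"
proof -
  obtain S c where S: "finite S" and Y: "Y = (\<lambda>\<omega>. \<Sum>s\<in>S. c s * X s \<omega>)"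
    using assms unfolding lincomb_def by blast
  define G where "G \<omega> = (\<Sum>s\<in>S. c s * Z s \<omega>)" for \<omega>
  have "expectation G = (\<Sum>s\<in>S. c s * \<theta>)"
    unfolding G_def by (simp add: integrable_Z expectation_Z)
  then have "Y = (\<lambda>\<omega>. G \<omega> - expectation G)"
    unfolding Y G_def X_def by (simp add: right_diff_distrib sum_subtractf)
  with gaussian_rv_combination[OF S] show thesis
    unfolding G_def[abs_def] by (rule that)
qed

lemma lincomb_moments:
  assumes "lincomb Y"
  shows "integrable M (\<lambda>\<omega>. Y \<omega> ^ k)"
    and "expectation (\<lambda>\<omega>. Y \<omega> ^ 4) = 3 * (expectation (\<lambda>\<omega>. Y \<omega> ^ 2))^2"
  using lincomb_centered_gaussian[OF assms] gaussian_rv_centered_moments by metis+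

lemma lincomb_X: "lincomb (X p)"
  unfolding lincomb_def by (intro exI[of _ "{p}"] exI[of _ "\<lambda>_. 1"]) auto

lemma lincomb_linear:
  assumes "lincomb Y1" and "lincomb Y2"
  shows "lincomb (\<lambda>\<omega>. a * Y1 \<omega> + b * Y2 \<omega>)"
proof -
  obtain S1 c1 where S1: "finite S1" and Y1: "Y1 = (\<lambda>\<omega>. \<Sum>s\<in>S1. c1 s * X s \<omega>)"
    using assms(1) unfolding lincomb_def by blast
  obtain S2 c2 where S2: "finite S2" and Y2: "Y2 = (\<lambda>\<omega>. \<Sum>s\<in>S2. c2 s * X s \<omega>)"
    using assms(2) unfolding lincomb_def by blast
  have extend: "(\<Sum>s\<in>S. d s * X s \<omega>) = (\<Sum>s\<in>S1 \<union> S2. (if s \<in> S then d s else 0) * X s \<omega>)"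
    if "S \<subseteq> S1 \<union> S2" for S d \<omega>
    using that S1 S2 by (intro sum.mono_neutral_cong_left) auto
  show ?thesis
    unfolding lincomb_def Y1 Y2
    by (intro exI[of _ "S1 \<union> S2"]
        exI[of _ "\<lambda>s. a * (if s \<in> S1 then c1 s else 0) + b * (if s \<in> S2 then c2 s else 0)"])
      (simp add: S1 S2 extend[of S1] extend[of S2] sum_distrib_left sum.distrib algebra_simps)
qed

lemma lincomb_sum:
  assumes "finite I" and "\<And>i. i \<in> I \<Longrightarrow> lincomb (Y i)"
  shows "lincomb (\<lambda>\<omega>. \<Sum>i\<in>I. Y i \<omega>)"
  using assms
proof (induction I rule: finite_induct)
  case empty
  show ?case
    unfolding lincomb_def by (intro exI[of _ "{}"]) simp
next
  case (insert i I)
  then show ?case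
    using lincomb_linear[of "Y i" "\<lambda>\<omega>. \<Sum>i\<in>I. Y i \<omega>" 1 1] by simp
qed

lemma lincomb_isserlis:
  assumes a: "lincomb a" and b: "lincomb b"
  shows "integrable M (\<lambda>\<omega>. a \<omega> * b \<omega>)"
    and "integrable M (\<lambda>\<omega>. (a \<omega>)^2 * (b \<omega>)^2)"
    and "expectation (\<lambda>\<omega>. (a \<omega>)^2 * (b \<omega>)^2) =
      expectation (\<lambda>\<omega>. (a \<omega>)^2) * expectation (\<lambda>\<omega>. (b \<omega>)^2) + 2 * (expectation (\<lambda>\<omega>. a \<omega> * b \<omega>))^2"
proof -
  define p where "p \<omega> = a \<omega> + b \<omega>" for \<omega>
  define m where "m \<omega> = a \<omega> - b \<omega>" for \<omega>
  have p: "lincomb p" and m: "lincomb m"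
    unfolding p_def[abs_def] m_def[abs_def]
    using lincomb_linear[OF a b, of 1 1] lincomb_linear[OF a b, of 1 "-1"] by simp_all
  note moments = lincomb_moments[OF a] lincomb_moments[OF b] lincomb_moments[OF p] lincomb_moments[OF m]
  have mult_eq: "a \<omega> * b \<omega> = ((p \<omega>)^2 - (a \<omega>)^2 - (b \<omega>)^2) / 2" for \<omega>
    unfolding p_def by (simp add: power2_eq_square field_simps)
  show mult: "integrable M (\<lambda>\<omega>. a \<omega> * b \<omega>)"
    unfolding mult_eq using moments by simp
  \<comment> \<open>Polarization reduces the mixed fourth moment to fourth moments of single Gaussians.\<close>
  have sq_mult_sq_eq: "(a \<omega>)^2 * (b \<omega>)^2 = ((p \<omega>)^4 + (m \<omega>)^4 - 2 * (a \<omega>)^4 - 2 * (b \<omega>)^4) / 12" for \<omega>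
    unfolding p_def m_def by (simp add: eval_nat_numeral field_simps)
  show "integrable M (\<lambda>\<omega>. (a \<omega>)^2 * (b \<omega>)^2)"
    unfolding sq_mult_sq_eq using moments by simp
  define A B C where "A = expectation (\<lambda>\<omega>. (a \<omega>)^2)" and "B = expectation (\<lambda>\<omega>. (b \<omega>)^2)"
    and "C = expectation (\<lambda>\<omega>. a \<omega> * b \<omega>)"
  have "(p \<omega>)^2 = (a \<omega>)^2 + (b \<omega>)^2 + 2 * (a \<omega> * b \<omega>)"
    and "(m \<omega>)^2 = (a \<omega>)^2 + (b \<omega>)^2 - 2 * (a \<omega> * b \<omega>)" for \<omega>
    unfolding p_def m_def by (simp_all add: power2_eq_square algebra_simps)
  then have Ep: "expectation (\<lambda>\<omega>. (p \<omega>)^2) = A + B + 2 * C"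
    and Em: "expectation (\<lambda>\<omega>. (m \<omega>)^2) = A + B - 2 * C"
    unfolding A_def B_def C_def using moments mult by simp_all
  have "expectation (\<lambda>\<omega>. (a \<omega>)^2 * (b \<omega>)^2) =
      (3 * (A + B + 2 * C)^2 + 3 * (A + B - 2 * C)^2 - 6 * A^2 - 6 * B^2) / 12"
    unfolding sq_mult_sq_eq using moments by (simp add: Ep Em A_def[symmetric] B_def[symmetric])
  also have "\<dots> = A * B + 2 * C^2"
    by (simp add: power2_eq_square field_simps)
  finally show "expectation (\<lambda>\<omega>. (a \<omega>)^2 * (b \<omega>)^2) =
      expectation (\<lambda>\<omega>. (a \<omega>)^2) * expectation (\<lambda>\<omega>. (b \<omega>)^2) + 2 * (expectation (\<lambda>\<omega>. a \<omega> * b \<omega>))^2"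
    unfolding A_def B_def C_def .
qed

lemma expectation_X_mult_X:
  "expectation (\<lambda>\<omega>. X p \<omega> * X q \<omega>) = R (fst q - fst p) (snd q - snd p)"
proof -
  let ?P = "PiM UNIV (\<lambda>_. borel) :: (int \<times> int \<Rightarrow> real) measure"
  \<comment> \<open>Shifting the field by p moves the pair of sites (0, 0), q - p to p, q.\<close>
  define g where "g x = (x (0, 0) - \<theta>) * (x (fst q - fst p, snd q - snd p) - \<theta>)"
    for x :: "int \<times> int \<Rightarrow> real"
  have shift_measurable: "(\<lambda>\<omega> r. Z (fst r + a, snd r + b) \<omega>) \<in> measurable M ?P" for a b
    by (rule measurable_PiM_single') auto
  have g_measurable: "g \<in> borel_measurable ?P"
    unfolding g_def by measurable
  have "expectation (\<lambda>\<omega>. X p \<omega> * X q \<omega>) =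
      integral\<^sup>L (distr M ?P (\<lambda>\<omega> r. Z (fst r + fst p, snd r + snd p) \<omega>)) g"
    by (subst integral_distr[OF shift_measurable g_measurable]) (simp add: g_def X_def)
  also have "\<dots> = integral\<^sup>L (distr M ?P (\<lambda>\<omega> r. Z r \<omega>)) g"
    using stationary unfolding stationary2_def by simp
  also have "\<dots> = R (fst q - fst p) (snd q - snd p)"
    using integral_distr[OF shift_measurable[of 0 0] g_measurable] by (simp add: g_def covariance)
  finally show ?thesis .
qed

lemma integrable_X_mult_X: "integrable M (\<lambda>\<omega>. X p \<omega> * X q \<omega>)"
  by (rule lincomb_isserlis(1)[OF lincomb_X lincomb_X])

definition rowsum :: "nat \<Rightarrow> nat \<Rightarrow> 'a \<Rightarrow> real" where
  "rowsum N k \<omega> = (\<Sum>i\<in>{1..N}. X (int i, int k) \<omega> + X (int k, int i) \<omega>)"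

lemma lincomb_rowsum: "lincomb (rowsum N k)"
  unfolding rowsum_def[abs_def]
  by (intro lincomb_sum) (use lincomb_linear[OF lincomb_X lincomb_X, where a = 1 and b = 1] in simp_all)

lemma expectation_rowsum_mult: "expectation (\<lambda>\<omega>. rowsum N k \<omega> * rowsum N l \<omega>) = rowsum_cov R N k l"
proof -
  have "rowsum N k \<omega> * rowsum N l \<omega> = (\<Sum>i\<in>{1..N}. \<Sum>j\<in>{1..N}.
     X (int i, int k) \<omega> * X (int j, int l) \<omega> + X (int i, int k) \<omega> * X (int l, int j) \<omega> +
     X (int k, int i) \<omega> * X (int j, int l) \<omega> + X (int k, int i) \<omega> * X (int l, int j) \<omega>)" for \<omega>
    unfolding rowsum_def sum_product by (simp add: algebra_simps)
  then show ?thesis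
    unfolding rowsum_cov_def by (simp add: integrable_X_mult_X expectation_X_mult_X)
qed

(* 1' W_N^2 1 = |W_N 1|^2, as W_N is symmetric. *)
definition quad :: "nat \<Rightarrow> 'a \<Rightarrow> real" where
  "quad N \<omega> = (\<Sum>k\<in>{1..N}. (rowsum N k \<omega>)^2)"

lemma integrable_quad: "integrable M (quad N)"
  unfolding quad_def[abs_def] power2_eq_square
  using lincomb_isserlis(1)[OF lincomb_rowsum lincomb_rowsum] by simp

lemma expectation_quad: "expectation (quad N) = (\<Sum>k\<in>{1..N}. rowsum_cov R N k k)"
  unfolding quad_def[abs_def] power2_eq_square
  using lincomb_isserlis(1)[OF lincomb_rowsum lincomb_rowsum] by (simp add: expectation_rowsum_mult)

lemma quad_sq_eq: "(quad N \<omega>)^2 = (\<Sum>k\<in>{1..N}. \<Sum>l\<in>{1..N}. (rowsum N k \<omega>)^2 * (rowsum N l \<omega>)^2)"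
  unfolding quad_def power2_eq_square[of "sum _ _"] by (simp add: sum_product)

lemma integrable_quad_sq: "integrable M (\<lambda>\<omega>. (quad N \<omega>)^2)"
  unfolding quad_sq_eq using lincomb_isserlis(2)[OF lincomb_rowsum lincomb_rowsum] by simp

lemma variance_quad: "variance (quad N) = 2 * (\<Sum>k\<in>{1..N}. \<Sum>l\<in>{1..N}. (rowsum_cov R N k l)^2)"
proof -
  have "expectation (\<lambda>\<omega>. (quad N \<omega>)^2) = (\<Sum>k\<in>{1..N}. \<Sum>l\<in>{1..N}.
      rowsum_cov R N k k * rowsum_cov R N l l + 2 * (rowsum_cov R N k l)^2)"
    unfolding quad_sq_eq
    using lincomb_isserlis[OF lincomb_rowsum lincomb_rowsum]
    by (simp add: expectation_rowsum_mult power2_eq_square[of "rowsum _ _ _"])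
  also have "\<dots> = (\<Sum>k\<in>{1..N}. \<Sum>l\<in>{1..N}. rowsum_cov R N k k * rowsum_cov R N l l) +
      2 * (\<Sum>k\<in>{1..N}. \<Sum>l\<in>{1..N}. (rowsum_cov R N k l)^2)"
    by (simp add: sum.distrib sum_distrib_left)
  also have "\<dots> = (expectation (quad N))^2 + 2 * (\<Sum>k\<in>{1..N}. \<Sum>l\<in>{1..N}. (rowsum_cov R N k l)^2)"
    by (simp only: expectation_quad power2_eq_square sum_product)
  finally show ?thesis
    by (simp add: variance_eq integrable_quad integrable_quad_sq)
qed

theorem quad_conv_in_prob:
  assumes "(\<lambda>(i, j). \<bar>R i j\<bar>) summable_on UNIV"
  shows "conv_in_prob M (\<lambda>N \<omega>. 1 / (real N)^2 * quad N \<omega>) (\<Sum>\<^sub>\<infinity>m. R m 0 + R 0 m)"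
proof (rule conv_in_prob_if_expectation_variance_tendsto)
  show "(\<lambda>\<omega>. 1 / (real N)^2 * quad N \<omega>) \<in> borel_measurable M" for N
    using integrable_quad by measurable
  show "integrable M (\<lambda>\<omega>. (1 / (real N)^2 * quad N \<omega>)^2)" for N
    unfolding power_mult_distrib by (rule integrable_mult_right[OF integrable_quad_sq])
  show "(\<lambda>N. expectation (\<lambda>\<omega>. 1 / (real N)^2 * quad N \<omega>)) \<longlonglongrightarrow> (\<Sum>\<^sub>\<infinity>m. R m 0 + R 0 m)"
    using rowsum_cov_trace_tendsto[OF assms] by (simp add: expectation_quad)
  have "variance (\<lambda>\<omega>. 1 / (real N)^2 * quad N \<omega>) =
      2 * ((\<Sum>k\<in>{1..N}. \<Sum>l\<in>{1..N}. (rowsum_cov R N k l)^2) / (real N)^4)" for N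
    unfolding variance_scale variance_quad by (simp add: power_divide flip: power_mult)
  then show "(\<lambda>N. variance (\<lambda>\<omega>. 1 / (real N)^2 * quad N \<omega>)) \<longlonglongrightarrow> 0"
    using tendsto_mult_right_zero[OF rowsum_cov_sq_sum_tendsto[OF assms], of 2] by simp
qed

end

theorem lemma3:
  fixes M :: "'a measure" and Z :: "int \<times> int \<Rightarrow> 'a \<Rightarrow> real"
    and \<theta> :: real and R :: "int \<Rightarrow> int \<Rightarrow> real"
  assumes "prob_space M"
    and "\<theta> > 0"
    and "gaussian_process M Z"
    and "stationary2 M Z"
    and "\<And>i j. prob_space.expectation M (Z (i, j)) = \<theta>"
    and "\<And>i j. R i j = prob_space.expectation M (\<lambda>\<omega>. (Z (0, 0) \<omega> - \<theta>) * (Z (i, j) \<omega> - \<theta>))"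
    and "(\<lambda>(i, j). \<bar>R i j\<bar>) summable_on (UNIV :: (int \<times> int) set)"
    and "(\<Sum>\<^sub>\<infinity>(i, j)\<in>(UNIV :: (int \<times> int) set). R i j) \<noteq> 0"
  shows "conv_in_prob M
           (\<lambda>N \<omega>. (1 / (real N)^2) *
              (\<Sum>i\<in>{1..N}. \<Sum>j\<in>{1..N}. \<Sum>k\<in>{1..N}.
                 ((Z (int i, int k) \<omega> - \<theta>) + (Z (int k, int i) \<omega> - \<theta>)) *
                 ((Z (int k, int j) \<omega> - \<theta>) + (Z (int j, int k) \<omega> - \<theta>))))
           (2 * ((1 / (2 * \<theta>)) * (\<Sum>\<^sub>\<infinity>i\<in>(UNIV :: int set). R i 0 + R 0 i)) * \<theta>)"
proof -
  interpret stationary_gaussian_field M Z \<theta> R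
    by (intro stationary_gaussian_field.intro stationary_gaussian_field_axioms.intro) (simp_all add: assms)
  have "(\<Sum>i\<in>{1..N}. \<Sum>j\<in>{1..N}. \<Sum>k\<in>{1..N}.
      ((Z (int i, int k) \<omega> - \<theta>) + (Z (int k, int i) \<omega> - \<theta>)) *
      ((Z (int k, int j) \<omega> - \<theta>) + (Z (int j, int k) \<omega> - \<theta>))) = quad N \<omega>" for N \<omega>
    unfolding quad_def rowsum_def X_def
    by (rule sum_triple_product_symmetric
        [where W = "\<lambda>i k. (Z (int i, int k) \<omega> - \<theta>) + (Z (int k, int i) \<omega> - \<theta>)"]) simp
  moreover have "2 * ((1 / (2 * \<theta>)) * (\<Sum>\<^sub>\<infinity>i. R i 0 + R 0 i)) * \<theta> = (\<Sum>\<^sub>\<infinity>i. R i 0 + R 0 i)"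
    using \<open>\<theta> > 0\<close> by simp
  ultimately show ?thesis
    using quad_conv_in_prob[OF assms(7)] by simp
qed

end
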